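(* Let $X_1,\ldots,X_n$ be non-empty sets and let $L=\{x_1,\ldots,x_k\}\subset X_1\times\cdots\times X_n$ be a loop. Then there exist integers $n_1,\ldots,n_k$ with $\gcd(n_1,\ldots,n_k)=1$ such that the formal sum $\sum_{j=1}^k n_jx_j$ vanishes, and such a tuple $(n_1,\ldots,n_k)$ is unique up to a global sign: if $(m_1,\ldots,m_k)$ is another tuple of integers with $\gcd(m_1,\ldots,m_k)=1$ for which $\sum_j m_jx_j$ vanishes, then either $m_j=n_j$ for all $j$ or $m_j=-n_j$ for all $j$.
   Context: For points $x_1,\ldots,x_k\in X_1\times\cdots\times X_n$ (with $x_j=(x_{j1},\ldots,x_{jn})$) and numbers $c_1,\ldots,c_k$, the formal sum $\sum_j c_jx_j$ vanishes (coordinate-wise) if for every $i\in\{1,\ldots,n\}$ and every $a\in X_i$, $\sum_{j:\,x_{ji}=a}c_j=0$. A non-empty finite set $L=\{x_1,\ldots,x_k\}$ of distinct points is a loop if there exist non-zero integers $n_1,\ldots,n_k$ such that $\sum_j n_jx_j$ vanishes, and no strictly smaller non-empty subset of $L$ has this property. *)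

theory Defs
  imports Main "HOL-Library.FuncSet"
begin

text \<open>Points of X_1 x ... x X_n are functions on the index set {..<n} (coordinates 0..n-1),
  extensional outside it (PiE). A formal sum over a finite set L of points is given by a
  coefficient function c on L.\<close>

definition vanishes :: "nat \<Rightarrow> (nat \<Rightarrow> 'a set) \<Rightarrow> (nat \<Rightarrow> 'a) set \<Rightarrow> ((nat \<Rightarrow> 'a) \<Rightarrow> int) \<Rightarrow> bool" where
  "vanishes n X L c \<longleftrightarrow>
     (\<forall>i<n. \<forall>a\<in>X i. (\<Sum>x\<in>{x\<in>L. x i = a}. c x) = 0)"

definition is_loop :: "nat \<Rightarrow> (nat \<Rightarrow> 'a set) \<Rightarrow> (nat \<Rightarrow> 'a) set \<Rightarrow> bool" where
  "is_loop n X L \<longleftrightarrow>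
     finite L \<and> L \<noteq> {} \<and> L \<subseteq> PiE {..<n} X \<and>
     (\<exists>c. (\<forall>x\<in>L. c x \<noteq> 0) \<and> vanishes n X L c) \<and>
     (\<forall>L'. L' \<noteq> {} \<and> L' \<subset> L \<longrightarrow>
        \<not> (\<exists>c. (\<forall>x\<in>L'. c x \<noteq> 0) \<and> vanishes n X L' c))"

end

theory Submission
  imports Defs
begin

text \<open>The integer solutions of the vanishing conditions on a loop L form a
  line: if c is a nowhere-zero solution, x0 \<in> L, and m is any solution, then
  c x0 \<cdot> m - m x0 \<cdot> c is a solution vanishing at x0, so its support is a proper subset of L
  carrying a nowhere-zero solution; by minimality of L it is empty. Dividing c by the gcd of
  its entries gives a primitive solution, and two proportional primitive integer vectors agree
  up to sign.\<close>

lemma vanishes_lincomb: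
  assumes "vanishes n X L c" "vanishes n X L m"
  shows "vanishes n X L (\<lambda>x. a * c x + b * m x)"
  using assms unfolding vanishes_def by (simp add: sum.distrib sum_distrib_left[symmetric])

lemma vanishes_cancel_factor:
  fixes g :: int
  assumes "vanishes n X L c'" "g \<noteq> 0" "\<And>x. x \<in> L \<Longrightarrow> c' x = g * c x"
  shows "vanishes n X L c"
  unfolding vanishes_def
proof (intro allI impI ballI)
  fix i a assume "i < n" "a \<in> X i"
  have "g * (\<Sum>x\<in>{x\<in>L. x i = a}. c x) = (\<Sum>x\<in>{x\<in>L. x i = a}. c' x)"
    by (simp add: sum_distrib_left assms(3))
  also have "\<dots> = 0" using assms(1) \<open>i < n\<close> \<open>a \<in> X i\<close> unfolding vanishes_def by blast
  finally show "(\<Sum>x\<in>{x\<in>L. x i = a}. c x) = 0" using \<open>g \<noteq> 0\<close> by simp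
qed

lemma vanishes_on_support:
  assumes "finite L" "vanishes n X L d"
  shows "vanishes n X {x\<in>L. d x \<noteq> 0} d"
  unfolding vanishes_def
proof (intro allI impI ballI)
  fix i a assume "i < n" "a \<in> X i"
  have "(\<Sum>x\<in>{x\<in>{x\<in>L. d x \<noteq> 0}. x i = a}. d x) = (\<Sum>x\<in>{x\<in>L. x i = a}. d x)"
    by (rule sum.mono_neutral_left) (use assms(1) in auto)
  also have "\<dots> = 0" using assms(2) \<open>i < n\<close> \<open>a \<in> X i\<close> unfolding vanishes_def by blast
  finally show "(\<Sum>x\<in>{x\<in>{x\<in>L. d x \<noteq> 0}. x i = a}. d x) = 0" .
qed

lemma is_loop_vanishes_proportional:
  assumes loop: "is_loop n X L"
    and c: "\<forall>x\<in>L. c x \<noteq> 0" "vanishes n X L c"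
    and m: "vanishes n X L m" and "x0 \<in> L" "x \<in> L"
  shows "c x0 * m x = m x0 * c x"
proof (rule ccontr)
  define d where "d = (\<lambda>x. c x0 * m x + (- m x0) * c x)"
  define L' where "L' = {x\<in>L. d x \<noteq> 0}"
  assume "c x0 * m x \<noteq> m x0 * c x"
  then have "L' \<noteq> {}" using \<open>x \<in> L\<close> unfolding d_def L'_def by auto
  moreover have "d x0 = 0" unfolding d_def by simp
  then have "L' \<subset> L" using \<open>x0 \<in> L\<close> unfolding L'_def by auto
  moreover have "finite L" using loop unfolding is_loop_def by simp
  then have "vanishes n X L' d"
    unfolding L'_def d_def by (rule vanishes_on_support[OF _ vanishes_lincomb[OF m c(2)]])
  moreover have "\<forall>x\<in>L'. d x \<noteq> 0" unfolding L'_def by simp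
  ultimately show False using loop unfolding is_loop_def by blast
qed

lemma vanishes_obtain_primitive:
  assumes "vanishes n X L c'" "\<forall>x\<in>L. c' x \<noteq> 0" "L \<noteq> {}"
  obtains c where "vanishes n X L c" "Gcd (c ` L) = 1" "\<forall>x\<in>L. c x \<noteq> 0"
proof -
  let ?g = "Gcd (c' ` L)"
  define c where "c x = c' x div ?g" for x
  have "?g \<noteq> 0" using assms(2,3) by auto
  have c'_eq: "c' x = ?g * c x" if "x \<in> L" for x
    using Gcd_dvd[of "c' x" "c' ` L"] that unfolding c_def by simp
  have "vanishes n X L c" using vanishes_cancel_factor[OF assms(1) \<open>?g \<noteq> 0\<close> c'_eq] .
  moreover have "Gcd (c ` L) = 1"
  proof -
    have "c' ` L = (*) ?g ` c ` L" using c'_eq by (force simp: image_image)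
    then have "?g = Gcd ((*) ?g ` c ` L)" by simp
    also have "\<dots> = ?g * Gcd (c ` L)" by (simp add: Gcd_mult abs_mult)
    finally show ?thesis using \<open>?g \<noteq> 0\<close> by simp
  qed
  moreover have "\<forall>x\<in>L. c x \<noteq> 0" using assms(2) c'_eq by (metis mult_zero_right)
  ultimately show ?thesis using that by blast
qed

lemma primitive_proportional_eq_or_neg:
  fixes c m :: "'b \<Rightarrow> int"
  assumes "Gcd (c ` A) = 1" "Gcd (m ` A) = 1" "x0 \<in> A" "c x0 \<noteq> 0"
    and proportional: "\<And>x. x \<in> A \<Longrightarrow> c x0 * m x = m x0 * c x"
  shows "(\<forall>x\<in>A. m x = c x) \<or> (\<forall>x\<in>A. m x = - c x)"
proof -
  let ?p = "c x0" and ?q = "m x0"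
  have "?p dvd ?q * c x" "?q dvd ?p * m x" if "x \<in> A" for x
    using proportional[OF that] by (metis dvd_triv_left)+
  then have "?p dvd Gcd ((*) ?q ` c ` A)" "?q dvd Gcd ((*) ?p ` m ` A)"
    by (auto intro!: Gcd_greatest)
  then have "?p dvd ?q" "?q dvd ?p" using assms(1,2) by (simp_all add: Gcd_mult)
  then have "\<bar>?q\<bar> = \<bar>?p\<bar>" by (rule zdvd_antisym_abs[rotated])
  then have "?q = ?p \<or> ?q = - ?p" by arith
  then show ?thesis
  proof
    assume "?q = ?p"
    then have "\<forall>x\<in>A. ?p * m x = ?p * c x" using proportional by simp
    then show ?thesis using \<open>?p \<noteq> 0\<close> by simp
  next
    assume "?q = - ?p"
    then have "\<forall>x\<in>A. ?p * m x = ?p * - c x" using proportional by simp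
    then show ?thesis using \<open>?p \<noteq> 0\<close> by (simp del: mult_minus_right)
  qed
qed

theorem lemma2:
  fixes n :: nat and X :: "nat \<Rightarrow> 'a set" and L :: "(nat \<Rightarrow> 'a) set"
  assumes "\<And>i. i < n \<Longrightarrow> X i \<noteq> {}"
    and "is_loop n X L"
  shows "\<exists>c :: (nat \<Rightarrow> 'a) \<Rightarrow> int. Gcd (c ` L) = 1 \<and> vanishes n X L c \<and>
           (\<forall>m :: (nat \<Rightarrow> 'a) \<Rightarrow> int. Gcd (m ` L) = 1 \<and> vanishes n X L m \<longrightarrow>
              (\<forall>x\<in>L. m x = c x) \<or> (\<forall>x\<in>L. m x = - c x))"
proof -
  obtain c' where "\<forall>x\<in>L. c' x \<noteq> 0" "vanishes n X L c'"
    using assms(2) unfolding is_loop_def by blast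
  then obtain c where c: "vanishes n X L c" "Gcd (c ` L) = 1" "\<forall>x\<in>L. c x \<noteq> 0"
    using vanishes_obtain_primitive assms(2) unfolding is_loop_def by metis
  obtain x0 where "x0 \<in> L" using assms(2) unfolding is_loop_def by blast
  show ?thesis
  proof (intro exI[of _ c] conjI c(1,2) allI impI)
    fix m assume "Gcd (m ` L) = 1 \<and> vanishes n X L m"
    then show "(\<forall>x\<in>L. m x = c x) \<or> (\<forall>x\<in>L. m x = - c x)"
      using primitive_proportional_eq_or_neg[OF c(2) _ \<open>x0 \<in> L\<close>]
        is_loop_vanishes_proportional[OF assms(2) c(3,1) _ \<open>x0 \<in> L\<close>] c(3) \<open>x0 \<in> L\<close>
      by blast
  qed
qed

end
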